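(* Let $\mathbf{V}$ be an $N\times N$ random Vandermonde matrix whose phases $\theta_1,\ldots,\theta_N$ are i.i.d. with distribution $\nu$ having a continuous density $f$ on $[0,1]$. Then $$\mathbb{E}\Big(\mathrm{tr}_N\log(\mathbf{V}^*\mathbf{V})\Big)=(N-1)\,\mathbb{E}\Big(\log\big|e^{2\pi i\theta_1}-e^{2\pi i\theta_2}\big|\Big)-\log N,$$ where $\theta_1,\theta_2$ are independent with distribution $\nu$.
   Context: For phases $\theta_1,\ldots,\theta_L\in[0,1]$, the $N\times L$ Vandermonde matrix $\mathbf{V}$ has entries $V(j,q)=\frac{1}{\sqrt N}e^{2\pi i (j-1)\theta_q}$, $j=1,\ldots,N$, $q=1,\ldots,L$; it is random when the phases are random. $\mathrm{tr}_N(\mathbf{A})=\frac1N\sum_{i}a_{ii}$ is the normalized trace, and $\log(\mathbf{V}^*\mathbf{V})$ is the matrix logarithm of the (almost surely positive definite) Hermitian matrix $\mathbf{V}^*\mathbf{V}$. *)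

theory Defs
  imports "HOL-Probability.Probability" "Jordan_Normal_Form.Schur_Decomposition"
begin

definition mat_trace :: "complex mat \<Rightarrow> complex" where
  "mat_trace A = (\<Sum>i<dim_row A. A $$ (i, i))"

definition tr_N :: "complex mat \<Rightarrow> complex" where
  "tr_N A = mat_trace A / of_nat (dim_row A)"

definition real_diag_mat :: "nat \<Rightarrow> (nat \<Rightarrow> real) \<Rightarrow> complex mat" where
  "real_diag_mat n d = mat n n (\<lambda>(i, j). if i = j then complex_of_real (d i) else 0)"

text \<open>Matrix logarithm of a Hermitian positive definite matrix, defined through the
  spectral theorem: if A = U diag(d) U^* with U unitary and all d_i > 0, then
  log A = U diag(ln d) U^*.  (Outside Hermitian positive definite matrices the value
  is unspecified.)\<close>
definition matrix_log :: "complex mat \<Rightarrow> complex mat" where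
  "matrix_log A = (SOME L. \<exists>U d.
      U \<in> carrier_mat (dim_row A) (dim_row A) \<and>
      mat_adjoint U * U = 1\<^sub>m (dim_row A) \<and>
      (\<forall>i < dim_row A. d i > 0) \<and>
      A = U * real_diag_mat (dim_row A) d * mat_adjoint U \<and>
      L = U * real_diag_mat (dim_row A) (\<lambda>i. ln (d i)) * mat_adjoint U)"

text \<open>The N x L Vandermonde matrix with phases theta_0, ..., theta_{L-1}
  (0-based indices): V(j,q) = exp(2 pi i j theta_q) / sqrt N.\<close>
definition vandermonde :: "nat \<Rightarrow> nat \<Rightarrow> (nat \<Rightarrow> real) \<Rightarrow> complex mat" where
  "vandermonde N L \<theta> = mat N L (\<lambda>(j, q).
      exp (2 * of_real pi * \<i> * of_nat j * of_real (\<theta> q)) / of_real (sqrt (real N)))"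

end

theory Submission
  imports Defs
begin

(*
  Write e(t) = exp(2 pi i t).  If the points e(theta_q) are pairwise distinct, V is invertible
  and the Hermitian matrix V^* V has a spectral decomposition U diag(d) U^* with U unitary and
  all d_i > 0 (obtained from a unitary Schur decomposition: an upper triangular Gram matrix is
  diagonal).  Hence tr log(V^* V) = sum_i ln d_i = ln det(V^* V) = 2 ln |det V|, and the
  Vandermonde determinant formula gives
      tr_N log(V^* V) = - ln N + (2/N) * sum_{p<q} ln |e(theta_q) - e(theta_p)|.
  If the points are not distinct, det(V^* V) = 0, no such decomposition exists and the matrix
  logarithm is the fixed value (SOME L. False); this makes the integrand measurable.
  When the phases are i.i.d. with a bounded density, the points are a.s. distinct, each pair
  (theta_q, theta_p) with p < q has law nu x nu, and ln |e(s) - e(t)| is integrable because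
  -ln |e(s) - e(t)| <= 2 sum_{c in {-1,0,1}} |s - t + c|^(-1/2).  Linearity of expectation over
  the N(N-1)/2 pairs yields the theorem.
*)

section \<open>Adjoints and unitary matrices\<close>

lemma index_mult_mat_sum:
  "i < dim_row A \<Longrightarrow> j < dim_col B \<Longrightarrow> dim_col A = dim_row B \<Longrightarrow>
   (A * B) $$ (i, j) = (\<Sum>k<dim_col A. A $$ (i, k) * B $$ (k, j))"
  by (simp add: index_mult_mat scalar_prod_def atLeast0LessThan)

lemma mat_adjoint_dim [simp]:
  "dim_row (mat_adjoint A) = dim_col A" "dim_col (mat_adjoint A) = dim_row A"
  by (auto simp: mat_adjoint_def)

lemma mat_adjoint_index [simp]:
  "i < dim_col A \<Longrightarrow> j < dim_row A \<Longrightarrow> mat_adjoint A $$ (i, j) = cnj (A $$ (j, i))"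
  by (simp add: mat_adjoint_def mat_of_rows_def)

lemma mat_adjoint_carrier [simp]: "A \<in> carrier_mat m n \<Longrightarrow> mat_adjoint A \<in> carrier_mat n m"
  by (metis mat_adjoint_dim carrier_matD carrier_matI)

lemma mat_adjoint_mult:
  assumes "A \<in> carrier_mat m n" "B \<in> carrier_mat n p"
  shows "mat_adjoint (A * B :: complex mat) = mat_adjoint B * mat_adjoint A"
proof (rule eq_matI)
  fix i j assume "i < dim_row (mat_adjoint B * mat_adjoint A)" "j < dim_col (mat_adjoint B * mat_adjoint A)"
  then have i: "i < p" and j: "j < m" using assms by auto
  have "mat_adjoint (A * B) $$ (i, j) = cnj ((A * B) $$ (j, i))" using i j assms by simp
  also have "(A * B) $$ (j, i) = (\<Sum>k<n. A $$ (j, k) * B $$ (k, i))"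
    using i j assms by (subst index_mult_mat_sum) auto
  also have "cnj \<dots> = (\<Sum>k<n. mat_adjoint B $$ (i, k) * mat_adjoint A $$ (k, j))"
    using i j assms by (simp add: mult.commute)
  also have "\<dots> = (mat_adjoint B * mat_adjoint A) $$ (i, j)"
    using i j assms by (subst index_mult_mat_sum) auto
  finally show "mat_adjoint (A * B) $$ (i, j) = (mat_adjoint B * mat_adjoint A) $$ (i, j)" .
qed (use assms in auto)

lemma mat_adjoint_four_block:
  assumes "A \<in> carrier_mat n1 m1" "B \<in> carrier_mat n1 m2" "C \<in> carrier_mat n2 m1" "D \<in> carrier_mat n2 m2"
  shows "mat_adjoint (four_block_mat A B C D :: complex mat) =
    four_block_mat (mat_adjoint A) (mat_adjoint C) (mat_adjoint B) (mat_adjoint D)"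
  by (rule eq_matI) (use assms in \<open>auto simp: index_mat_four_block\<close>)

lemma det_mat_adjoint:
  assumes "M \<in> carrier_mat n n"
  shows "det (mat_adjoint M) = cnj (det M)"
proof -
  have cnj_hom: "comm_ring_hom cnj" by unfold_locales auto
  have "mat_adjoint M = transpose_mat (map_mat cnj M)" by (rule eq_matI) auto
  then show ?thesis using assms by (simp add: det_transpose[of _ n] comm_ring_hom.hom_det[OF cnj_hom])
qed

text \<open>Reassociating products of square matrices; stated with the dimension in the conclusion
  so that the simplifier can discharge the carrier side conditions.\<close>

lemma mult_carrier_square: "A \<in> carrier_mat n n \<Longrightarrow> B \<in> carrier_mat n n \<Longrightarrow> A * B \<in> carrier_mat n n"
  by simp

lemma assoc_square:
  "A \<in> carrier_mat n n \<Longrightarrow> B \<in> carrier_mat n n \<Longrightarrow> C \<in> carrier_mat n n \<Longrightarrow> A * B * C = A * (B * C)"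
  by (rule assoc_mult_mat)

definition unitary_mat :: "nat \<Rightarrow> complex mat \<Rightarrow> bool" where
  "unitary_mat n U \<longleftrightarrow> U \<in> carrier_mat n n \<and> mat_adjoint U * U = 1\<^sub>m n"

lemma unitary_mat_right_inverse: "unitary_mat n U \<Longrightarrow> U * mat_adjoint U = 1\<^sub>m n"
  unfolding unitary_mat_def by (metis mat_adjoint_carrier mat_mult_left_right_inverse)

lemma unitary_mat_mult:
  assumes U: "unitary_mat n U" and W: "unitary_mat n W"
  shows "unitary_mat n (U * W)"
proof -
  have Uc: "U \<in> carrier_mat n n" and Wc: "W \<in> carrier_mat n n" using U W by (auto simp: unitary_mat_def)
  have "mat_adjoint (U * W) * (U * W) = mat_adjoint W * ((mat_adjoint U * U) * W)"
    using Uc Wc by (simp add: mat_adjoint_mult) (simp only: assoc_square[of _ n] mult_carrier_square mat_adjoint_carrier Uc Wc)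
  then show ?thesis using U W Uc Wc by (simp add: unitary_mat_def)
qed

lemma unitary_mat_conj_iff:
  assumes U: "unitary_mat n U" and A: "A \<in> carrier_mat n n" and T: "T \<in> carrier_mat n n"
  shows "mat_adjoint U * A * U = T \<longleftrightarrow> A = U * T * mat_adjoint U"
proof -
  have Uc: "U \<in> carrier_mat n n" and UU: "mat_adjoint U * U = 1\<^sub>m n" using U by (auto simp: unitary_mat_def)
  have UU': "U * mat_adjoint U = 1\<^sub>m n" using U by (rule unitary_mat_right_inverse)
  have Ua: "mat_adjoint U \<in> carrier_mat n n" using Uc by simp
  have "U * (mat_adjoint U * A * U) * mat_adjoint U = (U * mat_adjoint U) * A * (U * mat_adjoint U)"
    using Uc Ua A by (simp only: assoc_square[of _ n] mult_carrier_square)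
  moreover have "mat_adjoint U * (U * T * mat_adjoint U) * U = (mat_adjoint U * U) * T * (mat_adjoint U * U)"
    using Uc Ua T by (simp only: assoc_square[of _ n] mult_carrier_square)
  ultimately show ?thesis using A T UU UU' by auto
qed

lemma det_unitary_conj:
  assumes U: "unitary_mat n U" and D: "D \<in> carrier_mat n n"
  shows "det (U * D * mat_adjoint U) = det D"
proof -
  have Uc: "U \<in> carrier_mat n n" using U by (simp add: unitary_mat_def)
  have "det (mat_adjoint U) * det U = 1"
    using det_mult[OF mat_adjoint_carrier[OF Uc] Uc] U by (simp add: unitary_mat_def)
  then show ?thesis using Uc D by (simp add: det_mult[of _ n] algebra_simps)
qed

section \<open>Unitary Schur decomposition and Gram matrices\<close>

lemma real_diag_mat_carrier [simp]: "real_diag_mat n d \<in> carrier_mat n n"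
  by (simp add: real_diag_mat_def)

lemma det_real_diag_mat: "det (real_diag_mat n d) = of_real (\<Prod>i<n. d i)"
proof -
  have "det (real_diag_mat n d) = prod_list (diag_mat (real_diag_mat n d))"
    by (rule det_upper_triangular) (auto simp: real_diag_mat_def upper_triangular_def)
  also have "diag_mat (real_diag_mat n d) = map (\<lambda>i. complex_of_real (d i)) [0..<n]"
    by (simp add: diag_mat_def real_diag_mat_def)
  also have "prod_list \<dots> = (\<Prod>i<n. complex_of_real (d i))" by (induction n) auto
  finally show ?thesis by simp
qed

lemma cscalar_prod_self: "(w :: complex vec) \<bullet>c w = of_real (\<Sum>k<dim_vec w. (cmod (w $ k))\<^sup>2)"
proof -
  have "w \<bullet>c w = (\<Sum>k<dim_vec w. w $ k * cnj (w $ k))"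
    by (simp add: scalar_prod_def atLeast0LessThan)
  also have "\<dots> = (\<Sum>k<dim_vec w. of_real ((cmod (w $ k))\<^sup>2))"
    by (intro sum.cong refl) (rule complex_norm_square[symmetric])
  finally show ?thesis by simp
qed

lemma corthogonal_normalised_unitary:
  fixes ws :: "complex vec list"
  assumes ws: "set ws \<subseteq> carrier_vec n" "corthogonal ws" "length ws = n"
  defines "r \<equiv> \<lambda>i. sqrt (Re (ws ! i \<bullet>c ws ! i))"
  shows "unitary_mat n (mat n n (\<lambda>(k, i). complex_of_real (1 / r i) * ws ! i $ k))"
    and "\<forall>i<n. r i > 0"
proof -
  have wsc: "ws ! i \<in> carrier_vec n" if "i < n" for i using ws that by auto
  have self: "ws ! i \<bullet>c ws ! i = of_real ((r i)\<^sup>2)" and rpos: "r i > 0" if "i < n" for i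
  proof -
    let ?s = "\<Sum>k<dim_vec (ws ! i). (cmod (ws ! i $ k))\<^sup>2"
    have "ws ! i \<bullet>c ws ! i \<noteq> 0" using ws that unfolding corthogonal_def by auto
    moreover have s: "ws ! i \<bullet>c ws ! i = of_real ?s" by (rule cscalar_prod_self)
    moreover have "?s \<ge> 0" by (intro sum_nonneg) auto
    ultimately have "?s > 0" by (metis less_eq_real_def of_real_0)
    then show "ws ! i \<bullet>c ws ! i = of_real ((r i)\<^sup>2)" "r i > 0" unfolding r_def s by simp_all
  qed
  then show "\<forall>i<n. r i > 0" by blast
  define W where "W = mat n n (\<lambda>(k, i). complex_of_real (1 / r i) * ws ! i $ k)"
  have Wc: "W \<in> carrier_mat n n" unfolding W_def by simp
  have "mat_adjoint W * W = 1\<^sub>m n"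
  proof (rule eq_matI)
    fix i j assume "i < dim_row (1\<^sub>m n :: complex mat)" "j < dim_col (1\<^sub>m n :: complex mat)"
    then have i: "i < n" and j: "j < n" by auto
    have "(mat_adjoint W * W) $$ (i, j) = (\<Sum>k<n. mat_adjoint W $$ (i, k) * W $$ (k, j))"
      using Wc i j by (subst index_mult_mat_sum) auto
    also have "\<dots> = (\<Sum>k<n. complex_of_real (1 / r i) * complex_of_real (1 / r j) *
                          (ws ! j $ k * cnj (ws ! i $ k)))"
      using i j by (intro sum.cong refl) (auto simp: W_def)
    also have "\<dots> = complex_of_real (1 / r i) * complex_of_real (1 / r j) * (ws ! j \<bullet>c ws ! i)"
      using wsc[OF i] wsc[OF j] by (simp add: sum_distrib_left scalar_prod_def atLeast0LessThan)
    also have "\<dots> = 1\<^sub>m n $$ (i, j)"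
    proof (cases "i = j")
      case True
      then show ?thesis using self[OF i] rpos[OF i] i by (simp add: power2_eq_square)
    next
      case False
      then have "ws ! j \<bullet>c ws ! i = 0" using ws i j unfolding corthogonal_def by auto
      then show ?thesis using False i j by simp
    qed
    finally show "(mat_adjoint W * W) $$ (i, j) = 1\<^sub>m n $$ (i, j)" .
  qed (use Wc in auto)
  then show "unitary_mat n W" using Wc unfolding unitary_mat_def by blast
qed

text \<open>Every nonzero vector is, up to a nonzero factor, the first column of a unitary matrix:
  complete it to a basis, orthogonalise by Gram--Schmidt and normalise the columns.\<close>

lemma unitary_with_first_column:
  fixes v :: "complex vec"
  assumes v: "v \<in> carrier_vec n" and v0: "v \<noteq> 0\<^sub>v n"
  shows "\<exists>W c. unitary_mat n W \<and> c \<noteq> 0 \<and> col W 0 = c \<cdot>\<^sub>v v"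
proof -
  have n: "n > 0" using v v0 by (metis carrier_vecD eq_vecI gr0I index_zero_vec(2) less_nat_zero_code)
  interpret cof_vec_space n "TYPE(complex)" .
  define b where "b = basis_completion v"
  define ws where "ws = gram_schmidt n b"
  from basis_completion[OF v v0, folded b_def]
  have dist_b: "distinct b" and indep: "\<not> lin_dep (set b)" and b: "set b \<subseteq> carrier_vec n"
    and hdb: "hd b = v" and len_b: "length b = n" by (auto simp: basis_def)
  from hdb len_b n obtain vs where bv: "b = v # vs" by (cases b) auto
  from gram_schmidt_result[OF b dist_b indep refl, folded ws_def]
  have ws: "set ws \<subseteq> carrier_vec n" "corthogonal ws" "length ws = n" by (auto simp: len_b)
  have ws0: "ws ! 0 = v"
    using gram_schmidt_hd[OF v, of vs] ws(3) n unfolding ws_def bv by (cases "gram_schmidt n (v # vs)") auto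
  define r where "r i = sqrt (Re (ws ! i \<bullet>c ws ! i))" for i
  define W where "W = mat n n (\<lambda>(k, i). complex_of_real (1 / r i) * ws ! i $ k)"
  have "unitary_mat n W" and "r 0 > 0"
    using corthogonal_normalised_unitary[OF ws] n unfolding W_def r_def by auto
  moreover have "col W 0 = complex_of_real (1 / r 0) \<cdot>\<^sub>v v"
    by (rule eq_vecI) (use n v ws0 in \<open>auto simp: W_def\<close>)
  ultimately show ?thesis by (intro exI[of _ W] exI[of _ "complex_of_real (1 / r 0)"]) simp
qed

lemma unitary_conj_eigenvector_col:
  fixes A :: "complex mat"
  assumes A: "A \<in> carrier_mat (Suc n) (Suc n)" and W: "unitary_mat (Suc n) W"
    and v: "v \<in> carrier_vec (Suc n)" and Av: "A *\<^sub>v v = e \<cdot>\<^sub>v v" and colW: "col W 0 = c \<cdot>\<^sub>v v"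
  shows "col (mat_adjoint W * A * W) 0 = e \<cdot>\<^sub>v unit_vec (Suc n) 0"
proof -
  have Wc: "W \<in> carrier_mat (Suc n) (Suc n)" and WW: "mat_adjoint W * W = 1\<^sub>m (Suc n)"
    using W by (auto simp: unitary_mat_def)
  have "col (A * W) 0 = A *\<^sub>v col W 0" by (rule col_mult2[OF A Wc]) simp
  also have "\<dots> = c \<cdot>\<^sub>v (e \<cdot>\<^sub>v v)" by (simp add: colW mult_mat_vec[OF A v] Av)
  finally have colAW: "col (A * W) 0 = e \<cdot>\<^sub>v col W 0" by (simp add: colW smult_smult_assoc mult.commute)
  have "mat_adjoint W * A * W = mat_adjoint W * (A * W)"
    by (rule assoc_mult_mat[OF mat_adjoint_carrier[OF Wc] A Wc])
  then have "col (mat_adjoint W * A * W) 0 = mat_adjoint W *\<^sub>v col (A * W) 0"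
    by (simp only: col_mult2[OF mat_adjoint_carrier[OF Wc] mult_carrier_mat[OF A Wc] zero_less_Suc])
  also have "\<dots> = e \<cdot>\<^sub>v (mat_adjoint W *\<^sub>v col W 0)"
    unfolding colAW by (rule mult_mat_vec[OF mat_adjoint_carrier[OF Wc] col_carrier_vec[OF zero_less_Suc Wc]])
  also have "mat_adjoint W *\<^sub>v col W 0 = col (mat_adjoint W * W) 0"
    by (simp only: col_mult2[OF mat_adjoint_carrier[OF Wc] Wc zero_less_Suc])
  finally show ?thesis by (simp add: WW)
qed

lemma first_col_block_upper:
  fixes B :: "'a :: zero mat"
  assumes B: "B \<in> carrier_mat (Suc n) (Suc n)" and col0: "\<forall>i<n. B $$ (Suc i, 0) = 0"
  shows "\<exists>B1 B2 B3. B1 \<in> carrier_mat 1 1 \<and> B2 \<in> carrier_mat 1 n \<and> B3 \<in> carrier_mat n n \<and>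
           B = four_block_mat B1 B2 (0\<^sub>m n 1) B3"
proof -
  obtain B1 B2 B0 B3 where split: "split_block B 1 1 = (B1, B2, B0, B3)"
    by (cases "split_block B 1 1") auto
  have "dim_row B = 1 + n" "dim_col B = 1 + n" using B by auto
  from split_block[OF split this]
  have B1: "B1 \<in> carrier_mat 1 1" and B2: "B2 \<in> carrier_mat 1 n" and B0: "B0 \<in> carrier_mat n 1"
    and B3: "B3 \<in> carrier_mat n n" and blocks: "B = four_block_mat B1 B2 B0 B3" by auto
  have "B0 = 0\<^sub>m n 1"
  proof (rule eq_matI)
    fix i j assume ij: "i < dim_row (0\<^sub>m n 1 :: 'a mat)" "j < dim_col (0\<^sub>m n 1 :: 'a mat)"
    then have "B0 $$ (i, j) = B $$ (Suc i, 0)" using B1 B2 B0 B3 unfolding blocks by auto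
    then show "B0 $$ (i, j) = 0\<^sub>m n 1 $$ (i, j)" using ij col0 by simp
  qed (use B0 in auto)
  then show ?thesis using B1 B2 B3 blocks by blast
qed

text \<open>One step of the Schur decomposition: deflation by an eigenvector.\<close>

lemma unitary_deflation:
  fixes A :: "complex mat"
  assumes A: "A \<in> carrier_mat (Suc n) (Suc n)"
  shows "\<exists>W A1 A2 A3. unitary_mat (Suc n) W \<and> A1 \<in> carrier_mat 1 1 \<and> A2 \<in> carrier_mat 1 n \<and>
           A3 \<in> carrier_mat n n \<and> mat_adjoint W * A * W = four_block_mat A1 A2 (0\<^sub>m n 1) A3"
proof -
  obtain es where cp: "char_poly A = (\<Prod>a\<leftarrow>es. [:- a, 1:])" and "length es = Suc n"
    using char_poly_factorized[OF A] by auto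
  then obtain e es' where "es = e # es'" by (cases es) auto
  then have ev: "eigenvalue A e" unfolding eigenvalue_root_char_poly[OF A] cp by simp
  obtain v where v: "v \<in> carrier_vec (Suc n)" and v0: "v \<noteq> 0\<^sub>v (Suc n)" and Av: "A *\<^sub>v v = e \<cdot>\<^sub>v v"
    using find_eigenvector[OF A ev] A unfolding eigenvector_def by auto
  obtain W c where W: "unitary_mat (Suc n) W" and colW: "col W 0 = c \<cdot>\<^sub>v v"
    using unitary_with_first_column[OF v v0] by blast
  have Wc: "W \<in> carrier_mat (Suc n) (Suc n)" using W by (simp add: unitary_mat_def)
  have B: "mat_adjoint W * A * W \<in> carrier_mat (Suc n) (Suc n)" using Wc A by auto
  have "(mat_adjoint W * A * W) $$ (Suc i, 0) = 0" if "i < n" for i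
  proof -
    have "(mat_adjoint W * A * W) $$ (Suc i, 0) = col (mat_adjoint W * A * W) 0 $ Suc i"
      using B that by (metis Suc_less_eq carrier_matD index_col zero_less_Suc)
    then show ?thesis using that by (simp add: unitary_conj_eigenvector_col[OF A W v Av colW])
  qed
  then show ?thesis using first_col_block_upper[OF B] W by blast
qed

lemma four_block_upper_mult:
  assumes "X \<in> carrier_mat 1 1" "Y \<in> carrier_mat 1 n" "Z \<in> carrier_mat n n"
    and "X' \<in> carrier_mat 1 1" "Y' \<in> carrier_mat 1 n" "Z' \<in> carrier_mat n n"
  shows "four_block_mat X Y (0\<^sub>m n 1) Z * four_block_mat X' Y' (0\<^sub>m n 1) Z' =
    four_block_mat (X * X') (X * Y' + Y * Z') (0\<^sub>m n 1 :: 'a :: comm_ring_1 mat) (Z * Z')"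
  using assms by (simp add: mult_four_block_mat[of _ 1 1 _ n _ n _ _ 1 _ n])

lemma mat_adjoint_block_diag:
  fixes U :: "complex mat"
  assumes "U \<in> carrier_mat n n"
  shows "mat_adjoint (four_block_mat (1\<^sub>m 1) (0\<^sub>m 1 n) (0\<^sub>m n 1) U) =
    four_block_mat (1\<^sub>m 1) (0\<^sub>m 1 n) (0\<^sub>m n 1) (mat_adjoint U)"
proof -
  have "mat_adjoint (1\<^sub>m 1 :: complex mat) = 1\<^sub>m 1" "mat_adjoint (0\<^sub>m 1 n :: complex mat) = 0\<^sub>m n 1"
    "mat_adjoint (0\<^sub>m n 1 :: complex mat) = 0\<^sub>m 1 n"
    by (rule eq_matI; simp)+
  moreover have "mat_adjoint (four_block_mat (1\<^sub>m 1) (0\<^sub>m 1 n) (0\<^sub>m n 1) U) =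
    four_block_mat (mat_adjoint (1\<^sub>m 1)) (mat_adjoint (0\<^sub>m n 1)) (mat_adjoint (0\<^sub>m 1 n)) (mat_adjoint U)"
    by (rule mat_adjoint_four_block) (use assms in auto)
  ultimately show ?thesis by simp
qed

lemma unitary_mat_block_diag:
  assumes U: "unitary_mat n U"
  shows "unitary_mat (Suc n) (four_block_mat (1\<^sub>m 1) (0\<^sub>m 1 n) (0\<^sub>m n 1) U)"
proof -
  have Uc: "U \<in> carrier_mat n n" and UU: "mat_adjoint U * U = 1\<^sub>m n" using U by (auto simp: unitary_mat_def)
  have "four_block_mat (1\<^sub>m 1) (0\<^sub>m 1 n) (0\<^sub>m n 1) U \<in> carrier_mat (Suc n) (Suc n)"
    using Uc by (metis four_block_carrier_mat one_carrier_mat plus_1_eq_Suc)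
  moreover have "mat_adjoint (four_block_mat (1\<^sub>m 1) (0\<^sub>m 1 n) (0\<^sub>m n 1) U) *
      four_block_mat (1\<^sub>m 1) (0\<^sub>m 1 n) (0\<^sub>m n 1) U = 1\<^sub>m (Suc n)"
    unfolding mat_adjoint_block_diag[OF Uc] using Uc
    by (subst four_block_upper_mult) (auto simp: UU)
  ultimately show ?thesis unfolding unitary_mat_def ..
qed

lemma block_diag_conj:
  fixes U :: "complex mat"
  assumes U: "U \<in> carrier_mat n n" and A1: "A1 \<in> carrier_mat 1 1" and A2: "A2 \<in> carrier_mat 1 n"
    and A3: "A3 \<in> carrier_mat n n"
  defines "B \<equiv> four_block_mat (1\<^sub>m 1) (0\<^sub>m 1 n) (0\<^sub>m n 1) U"
  shows "mat_adjoint B * four_block_mat A1 A2 (0\<^sub>m n 1) A3 * B =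
    four_block_mat A1 (A2 * U) (0\<^sub>m n 1) (mat_adjoint U * A3 * U)"
proof -
  have "mat_adjoint B * four_block_mat A1 A2 (0\<^sub>m n 1) A3 =
        four_block_mat (1\<^sub>m 1 * A1) (1\<^sub>m 1 * A2 + 0\<^sub>m 1 n * A3) (0\<^sub>m n 1) (mat_adjoint U * A3)"
    unfolding B_def mat_adjoint_block_diag[OF U] using U A1 A2 A3 by (intro four_block_upper_mult) auto
  also have "\<dots> = four_block_mat A1 A2 (0\<^sub>m n 1) (mat_adjoint U * A3)" using A1 A2 A3 by simp
  also have "\<dots> * B = four_block_mat (A1 * 1\<^sub>m 1) (A1 * 0\<^sub>m 1 n + A2 * U) (0\<^sub>m n 1) (mat_adjoint U * A3 * U)"
    unfolding B_def using U A1 A2 A3 by (intro four_block_upper_mult) auto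
  also have "\<dots> = four_block_mat A1 (A2 * U) (0\<^sub>m n 1) (mat_adjoint U * A3 * U)" using A1 A2 U by simp
  finally show ?thesis .
qed

lemma unitary_schur:
  fixes A :: "complex mat"
  assumes "A \<in> carrier_mat n n"
  shows "\<exists>U T. unitary_mat n U \<and> T \<in> carrier_mat n n \<and> upper_triangular T \<and> A = U * T * mat_adjoint U"
  using assms
proof (induction n arbitrary: A)
  case 0
  then show ?case
    by (intro exI[of _ "1\<^sub>m 0"] exI[of _ A]) (auto simp: unitary_mat_def upper_triangular_def)
next
  case (Suc n A)
  obtain W A1 A2 A3 where W: "unitary_mat (Suc n) W" and A1: "A1 \<in> carrier_mat 1 1"
    and A2: "A2 \<in> carrier_mat 1 n" and A3: "A3 \<in> carrier_mat n n"
    and WAW: "mat_adjoint W * A * W = four_block_mat A1 A2 (0\<^sub>m n 1) A3"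
    using unitary_deflation[OF Suc.prems] by blast
  obtain U3 T3 where U3: "unitary_mat n U3" and T3: "T3 \<in> carrier_mat n n"
    and ut3: "upper_triangular T3" and A3_eq: "A3 = U3 * T3 * mat_adjoint U3"
    using Suc.IH[OF A3] by blast
  have U3c: "U3 \<in> carrier_mat n n" using U3 by (simp add: unitary_mat_def)
  have U3A3: "mat_adjoint U3 * A3 * U3 = T3" using unitary_mat_conj_iff[OF U3 A3 T3] A3_eq by simp
  define B where "B = four_block_mat (1\<^sub>m 1) (0\<^sub>m 1 n) (0\<^sub>m n 1) U3"
  define T where "T = four_block_mat A1 (A2 * U3) (0\<^sub>m n 1) T3"
  have B: "unitary_mat (Suc n) B" unfolding B_def by (rule unitary_mat_block_diag[OF U3])
  have Bc: "B \<in> carrier_mat (Suc n) (Suc n)" and Wc: "W \<in> carrier_mat (Suc n) (Suc n)"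
    using B W by (auto simp: unitary_mat_def)
  have Tc: "T \<in> carrier_mat (Suc n) (Suc n)"
    unfolding T_def using A1 T3 by (metis four_block_carrier_mat plus_1_eq_Suc)
  have BTB: "mat_adjoint B * (mat_adjoint W * A * W) * B = T"
    unfolding WAW B_def T_def using block_diag_conj[OF U3c A1 A2 A3] U3A3 by simp
  have "mat_adjoint (W * B) * A * (W * B) = T"
    using Wc Bc Suc.prems BTB
    by (simp add: mat_adjoint_mult) (simp only: assoc_square[of _ "Suc n"] mult_carrier_square mat_adjoint_carrier)
  then have "A = (W * B) * T * mat_adjoint (W * B)"
    using unitary_mat_conj_iff[OF unitary_mat_mult[OF W B] Suc.prems Tc] by simp
  moreover have "upper_triangular T"
    unfolding T_def using A1 T3 ut3
    by (intro upper_triangular_four_block[OF A1 T3 _ ut3]) (auto simp: upper_triangular_def)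
  ultimately show ?case using unitary_mat_mult[OF W B] Tc by blast
qed

text \<open>A Gram matrix \<open>W\<^sup>* W\<close> that is upper triangular is Hermitian and hence diagonal; its
  diagonal entries are the squared column norms, positive when \<open>W\<close> is invertible.\<close>

lemma upper_triangular_gram_diag:
  fixes W :: "complex mat"
  assumes W: "W \<in> carrier_mat n n" and dW: "det W \<noteq> 0"
    and ut: "upper_triangular (mat_adjoint W * W)"
  shows "\<exists>d. (\<forall>i<n. d i > 0) \<and> mat_adjoint W * W = real_diag_mat n d"
proof -
  define T where "T = mat_adjoint W * W"
  have Tc: "T \<in> carrier_mat n n" unfolding T_def using W by auto
  have Tent: "T $$ (i, j) = (\<Sum>k<n. cnj (W $$ (k, i)) * W $$ (k, j))" if "i < n" "j < n" for i j
    unfolding T_def using that W by (subst index_mult_mat_sum) auto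
  define d where "d i = (\<Sum>k<n. (cmod (W $$ (k, i)))\<^sup>2)" for i
  have Toff: "T $$ (i, j) = 0" if "i < n" "j < n" "i \<noteq> j" for i j
  proof (cases "j < i")
    case True
    then show ?thesis using ut that Tc unfolding T_def by (intro upper_triangularD) auto
  next
    case False
    then have "T $$ (j, i) = 0" using ut that Tc unfolding T_def by (intro upper_triangularD) auto
    moreover have "T $$ (i, j) = cnj (T $$ (j, i))" using that by (simp add: Tent mult.commute)
    ultimately show ?thesis by simp
  qed
  have Td: "T = real_diag_mat n d"
  proof (rule eq_matI)
    fix i j assume "i < dim_row (real_diag_mat n d)" "j < dim_col (real_diag_mat n d)"
    then have i: "i < n" and j: "j < n" by (auto simp: real_diag_mat_def)
    have "T $$ (i, i) = of_real (d i)"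
      unfolding Tent[OF i i] d_def of_real_sum
      by (intro sum.cong refl) (metis complex_norm_square mult.commute of_real_power)
    then show "T $$ (i, j) = real_diag_mat n d $$ (i, j)"
      using Toff[OF i j] i j by (cases "i = j") (auto simp: real_diag_mat_def)
  qed (use Tc in \<open>auto simp: real_diag_mat_def\<close>)
  have "det T = cnj (det W) * det W" unfolding T_def using W by (simp add: det_mult[of _ n] det_mat_adjoint)
  then have "det T \<noteq> 0" using dW by simp
  moreover have "det T = of_real (\<Prod>i<n. d i)"
    unfolding Td by (rule det_real_diag_mat)
  ultimately have "d i \<noteq> 0" if "i < n" for i using that by auto
  moreover have "d i \<ge> 0" for i unfolding d_def by (intro sum_nonneg) auto
  ultimately show ?thesis using Td unfolding T_def by (metis less_eq_real_def)
qed

text \<open>The decompositions admitted by the definition of the matrix logarithm: \<open>A = U diag(d) U\<^sup>*\<close>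
  with \<open>U\<close> unitary and all \<open>d i\<close> positive.\<close>

definition pos_spectral_decomp :: "nat \<Rightarrow> complex mat \<Rightarrow> complex mat \<Rightarrow> (nat \<Rightarrow> real) \<Rightarrow> bool" where
  "pos_spectral_decomp n A U d \<longleftrightarrow>
     unitary_mat n U \<and> (\<forall>i<n. d i > 0) \<and> A = U * real_diag_mat n d * mat_adjoint U"

text \<open>The spectral theorem for \<open>V\<^sup>* V\<close> with \<open>V\<close> invertible: in a unitary Schur decomposition
  \<open>V\<^sup>* V = U T U\<^sup>*\<close> the triangular factor is the Gram matrix of \<open>V U\<close>.\<close>

lemma gram_pos_spectral_decomp:
  fixes V :: "complex mat"
  assumes V: "V \<in> carrier_mat n n" and dV: "det V \<noteq> 0"
  shows "\<exists>U d. pos_spectral_decomp n (mat_adjoint V * V) U d"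
proof -
  have A: "mat_adjoint V * V \<in> carrier_mat n n" using V by auto
  obtain U T where U: "unitary_mat n U" and T: "T \<in> carrier_mat n n" and ut: "upper_triangular T"
    and AT: "mat_adjoint V * V = U * T * mat_adjoint U"
    using unitary_schur[OF A] by blast
  have Uc: "U \<in> carrier_mat n n" using U by (simp add: unitary_mat_def)
  have "T = mat_adjoint U * (mat_adjoint V * V) * U" using unitary_mat_conj_iff[OF U A T] AT by simp
  also have "\<dots> = mat_adjoint (V * U) * (V * U)"
    using V Uc by (simp add: mat_adjoint_mult) (simp only: assoc_square[of _ n] mult_carrier_square mat_adjoint_carrier)
  finally have TW: "T = mat_adjoint (V * U) * (V * U)" .
  have "det U \<noteq> 0" using det_mult[OF mat_adjoint_carrier[OF Uc] Uc] U by (auto simp: unitary_mat_def)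
  then have "det (V * U) \<noteq> 0" using V Uc dV by (simp add: det_mult[of _ n])
  then obtain d where "\<forall>i<n. d i > 0" and "T = real_diag_mat n d"
    using upper_triangular_gram_diag[of "V * U" n] V Uc ut TW by auto
  then show ?thesis using U AT unfolding pos_spectral_decomp_def by blast
qed

section \<open>Trace of the matrix logarithm\<close>

lemma mat_trace_unitary_conj_diag:
  assumes U: "unitary_mat n U"
  shows "mat_trace (U * real_diag_mat n g * mat_adjoint U) = of_real (\<Sum>i<n. g i)"
proof -
  have Uc: "U \<in> carrier_mat n n" and UU: "mat_adjoint U * U = 1\<^sub>m n" using U by (auto simp: unitary_mat_def)
  have UD: "(U * real_diag_mat n g) $$ (i, l) = U $$ (i, l) * of_real (g l)" if "i < n" "l < n" for i l
  proof -
    have "(U * real_diag_mat n g) $$ (i, l) = (\<Sum>k<n. U $$ (i, k) * real_diag_mat n g $$ (k, l))"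
      using Uc that by (subst index_mult_mat_sum) (auto simp: real_diag_mat_def)
    also have "\<dots> = (\<Sum>k<n. if k = l then U $$ (i, k) * of_real (g l) else 0)"
      using that by (intro sum.cong refl) (auto simp: real_diag_mat_def)
    finally show ?thesis using that by simp
  qed
  have diag: "(U * real_diag_mat n g * mat_adjoint U) $$ (i, i) =
      (\<Sum>k<n. of_real (g k) * (cnj (U $$ (i, k)) * U $$ (i, k)))" if i: "i < n" for i
  proof -
    have "(U * real_diag_mat n g * mat_adjoint U) $$ (i, i) =
        (\<Sum>l<n. (U * real_diag_mat n g) $$ (i, l) * mat_adjoint U $$ (l, i))"
      using Uc i by (subst index_mult_mat_sum) (auto simp: real_diag_mat_def)
    also have "\<dots> = (\<Sum>l<n. U $$ (i, l) * of_real (g l) * cnj (U $$ (i, l)))"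
      using Uc i by (intro sum.cong refl) (simp add: UD)
    finally show ?thesis by (simp add: mult_ac)
  qed
  have col_norm: "(\<Sum>i<n. cnj (U $$ (i, k)) * U $$ (i, k)) = 1" if k: "k < n" for k
  proof -
    have "(\<Sum>i<n. cnj (U $$ (i, k)) * U $$ (i, k)) = (mat_adjoint U * U) $$ (k, k)"
      using Uc k by (subst index_mult_mat_sum) auto
    then show ?thesis using UU k by simp
  qed
  have "mat_trace (U * real_diag_mat n g * mat_adjoint U) =
      (\<Sum>i<n. \<Sum>k<n. of_real (g k) * (cnj (U $$ (i, k)) * U $$ (i, k)))"
    unfolding mat_trace_def using Uc by (intro sum.cong) (simp, rule diag, simp)
  also have "\<dots> = (\<Sum>k<n. of_real (g k) * (\<Sum>i<n. cnj (U $$ (i, k)) * U $$ (i, k)))"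
    by (subst sum.swap) (simp add: sum_distrib_left)
  finally show ?thesis by (simp add: col_norm)
qed

lemma det_pos_spectral_decomp:
  assumes "pos_spectral_decomp n A U d"
  shows "det A = of_real (\<Prod>i<n. d i)" and "(\<Prod>i<n. d i) > 0"
  using assms unfolding pos_spectral_decomp_def
  by (auto simp: det_unitary_conj det_real_diag_mat intro: prod_pos)

lemma matrix_log_square:
  assumes "A \<in> carrier_mat n n"
  shows "matrix_log A = (SOME L. \<exists>U d. pos_spectral_decomp n A U d \<and>
                                       L = U * real_diag_mat n (\<lambda>i. ln (d i)) * mat_adjoint U)"
  using assms unfolding matrix_log_def pos_spectral_decomp_def unitary_mat_def by (simp add: conj_assoc)

text \<open>Whenever the logarithm is defined, its trace is the logarithm of the determinant
  (whichever admissible decomposition the choice operator picks).\<close>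

lemma tr_N_matrix_log:
  assumes A: "A \<in> carrier_mat n n" and dec: "\<exists>U d. pos_spectral_decomp n A U d"
  shows "tr_N (matrix_log A) = of_real (ln (Re (det A))) / of_nat n"
proof -
  define P where "P L \<longleftrightarrow> (\<exists>U d. pos_spectral_decomp n A U d \<and>
                                  L = U * real_diag_mat n (\<lambda>i. ln (d i)) * mat_adjoint U)" for L
  have log_def: "matrix_log A = (SOME L. P L)" unfolding matrix_log_square[OF A] P_def ..
  have "\<exists>L. P L" using dec unfolding P_def by blast
  then have "P (matrix_log A)" unfolding log_def by (rule someI_ex)
  then obtain U d where dec': "pos_spectral_decomp n A U d"
    and L: "matrix_log A = U * real_diag_mat n (\<lambda>i. ln (d i)) * mat_adjoint U"
    unfolding P_def by blast
  have U: "unitary_mat n U" and d: "\<forall>i<n. d i > 0" using dec' by (auto simp: pos_spectral_decomp_def)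
  have dim: "dim_row (matrix_log A) = n" using U unfolding L by (auto simp: unitary_mat_def)
  have "ln (Re (det A)) = ln (\<Prod>i<n. d i)"
    by (simp only: det_pos_spectral_decomp(1)[OF dec'] Re_complex_of_real)
  also have "\<dots> = (\<Sum>i<n. ln (d i))" using d by (subst ln_prod) auto
  finally have "ln (Re (det A)) = (\<Sum>i<n. ln (d i))" .
  moreover have "dim_row U = n" using U by (auto simp: unitary_mat_def)
  ultimately show ?thesis unfolding tr_N_def dim L mat_trace_unitary_conj_diag[OF U] by simp
qed

lemma tr_N_matrix_log_gram:
  fixes V :: "complex mat"
  assumes V: "V \<in> carrier_mat n n" and dV: "det V \<noteq> 0"
  shows "tr_N (matrix_log (mat_adjoint V * V)) = of_real (2 * ln (cmod (det V))) / of_nat n"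
proof -
  have A: "mat_adjoint V * V \<in> carrier_mat n n" using V by auto
  have "det (mat_adjoint V * V) = cnj (det V) * det V"
    using V by (simp add: det_mult[of _ n] det_mat_adjoint)
  also have "\<dots> = of_real ((cmod (det V))\<^sup>2)" by (metis complex_norm_square mult.commute)
  finally have "det (mat_adjoint V * V) = of_real ((cmod (det V))\<^sup>2)" .
  then show ?thesis
    using tr_N_matrix_log[OF A gram_pos_spectral_decomp[OF V dV]] dV by (simp add: ln_realpow)
qed

text \<open>For a singular matrix no admissible decomposition exists, so the matrix logarithm is the
  unspecified value of the choice operator.\<close>

lemma matrix_log_singular:
  assumes A: "A \<in> carrier_mat n n" and dA: "det A = 0"
  shows "matrix_log A = (SOME L. False)"
proof -
  have "\<not> pos_spectral_decomp n A U d" for U d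
  proof
    assume "pos_spectral_decomp n A U d"
    from det_pos_spectral_decomp[OF this] dA show False by (metis less_irrefl of_real_eq_0_iff)
  qed
  then show ?thesis unfolding matrix_log_square[OF A] by simp
qed

section \<open>Vandermonde determinants\<close>

lemma det_mat_col_scale:
  fixes c :: "nat \<Rightarrow> 'a :: comm_ring_1"
  shows "det (mat n n (\<lambda>(j, q). f j q * c q)) = (\<Prod>q<n. c q) * det (mat n n (\<lambda>(j, q). f j q))"
proof -
  define D where "D = mat n n (\<lambda>(i, j). if i = j then c i else 0)"
  have "mat n n (\<lambda>(j, q). f j q * c q) = mat n n (\<lambda>(j, q). f j q) * D"
  proof (rule eq_matI)
    fix i j assume "i < dim_row (mat n n (\<lambda>(j, q). f j q) * D)" "j < dim_col (mat n n (\<lambda>(j, q). f j q) * D)"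
    then have i: "i < n" and j: "j < n" by (auto simp: D_def)
    have "(mat n n (\<lambda>(j, q). f j q) * D) $$ (i, j) = (\<Sum>k<n. f i k * (if k = j then c k else 0))"
      using i j by (subst index_mult_mat_sum) (auto simp: D_def)
    also have "\<dots> = f i j * c j" using j by (simp add: if_distrib cong: if_cong)
    finally show "mat n n (\<lambda>(j, q). f j q * c q) $$ (i, j) = (mat n n (\<lambda>(j, q). f j q) * D) $$ (i, j)"
      using i j by simp
  qed (auto simp: D_def)
  moreover have "det D = (\<Prod>q<n. c q)"
  proof -
    have "det D = prod_list (diag_mat D)"
      by (rule det_upper_triangular) (auto simp: D_def upper_triangular_def)
    also have "diag_mat D = map c [0..<n]" by (auto simp: diag_mat_def D_def)
    also have "prod_list (map c [0..<n]) = (\<Prod>q<n. c q)" by (induction n) auto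
    finally show ?thesis .
  qed
  ultimately show ?thesis by (simp add: det_mult[of _ n] D_def mult.commute)
qed

lemma det_first_col_unit:
  fixes C :: "'a :: comm_ring_1 mat"
  assumes C: "C \<in> carrier_mat (Suc n) (Suc n)" and C00: "C $$ (0, 0) = 1"
    and col0: "\<And>i. 0 < i \<Longrightarrow> i < Suc n \<Longrightarrow> C $$ (i, 0) = 0"
  shows "det C = det (mat_delete C 0 0)"
proof -
  have "det C = (\<Sum>i<Suc n. C $$ (i, 0) * cofactor C i 0)"
    by (rule laplace_expansion_column[OF C]) simp
  also have "\<dots> = (\<Sum>i<Suc n. if i = 0 then cofactor C 0 0 else 0)"
    by (intro sum.cong refl) (auto simp: C00 col0)
  finally show ?thesis by (simp add: cofactor_def)
qed

text \<open>Subtracting \<open>x 0\<close> times each row from the next one (a unimodular lower triangular row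
  operation) clears the first column of a Vandermonde matrix below its top entry.\<close>

lemma det_vandermonde_reduce:
  fixes x :: "nat \<Rightarrow> 'a :: comm_ring_1"
  shows "det (mat (Suc n) (Suc n) (\<lambda>(j, q). x q ^ j)) =
         det (mat n n (\<lambda>(j, q). x (Suc q) ^ j * (x (Suc q) - x 0)))"
proof -
  define M where "M = mat (Suc n) (Suc n) (\<lambda>(j, q). x q ^ j)"
  define L where "L = mat (Suc n) (Suc n) (\<lambda>(i, j). if i = j then 1 else if i = Suc j then - x 0 else 0)"
  define C where "C = mat (Suc n) (Suc n) (\<lambda>(j, q). if j = 0 then 1 else x q ^ (j - 1) * (x q - x 0))"
  have Mc: "M \<in> carrier_mat (Suc n) (Suc n)" and Lc: "L \<in> carrier_mat (Suc n) (Suc n)"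
    and Cc: "C \<in> carrier_mat (Suc n) (Suc n)" by (auto simp: M_def L_def C_def)
  have "det L = prod_list (diag_mat L)"
    by (rule det_lower_triangular[OF _ Lc]) (auto simp: L_def)
  also have "diag_mat L = map (\<lambda>i. 1) [0..<Suc n]"
    unfolding diag_mat_def L_def by (auto intro!: map_cong)
  also have "prod_list \<dots> = 1" by (simp add: map_replicate_const)
  finally have detL: "det L = 1" .
  have LM: "L * M = C"
  proof (rule eq_matI)
    fix i j assume "i < dim_row C" "j < dim_col C"
    then have i: "i < Suc n" and j: "j < Suc n" by (auto simp: C_def)
    have "(L * M) $$ (i, j) = (\<Sum>k<Suc n. (if i = k then 1 else if i = Suc k then - x 0 else 0) * x j ^ k)"
      using i j Lc Mc by (subst index_mult_mat_sum) (auto simp: L_def M_def)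
    also have "\<dots> = C $$ (i, j)"
    proof (cases i)
      case 0
      have "(\<Sum>k<Suc n. (if i = k then 1 else if i = Suc k then - x 0 else 0) * x j ^ k) =
            (\<Sum>k<Suc n. if k = 0 then 1 else 0)"
        using 0 by (intro sum.cong refl) auto
      then show ?thesis using j 0 by (simp add: C_def)
    next
      case (Suc i')
      have "(\<Sum>k<Suc n. (if i = k then 1 else if i = Suc k then - x 0 else 0) * x j ^ k)
          = (\<Sum>k<Suc n. if k = i then x j ^ k else 0) + (\<Sum>k<Suc n. if k = i' then - x 0 * x j ^ k else 0)"
        unfolding sum.distrib[symmetric] using Suc by (intro sum.cong refl) auto
      also have "\<dots> = x j ^ i - x 0 * x j ^ i'" using i Suc by simp
      finally show ?thesis using i j Suc by (simp add: C_def algebra_simps)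
    qed
    finally show "(L * M) $$ (i, j) = C $$ (i, j)" .
  qed (auto simp: L_def C_def M_def)
  have "det M = det C" using det_mult[OF Lc Mc] detL LM by simp
  also have "\<dots> = det (mat_delete C 0 0)" by (rule det_first_col_unit[OF Cc]) (auto simp: C_def)
  also have "mat_delete C 0 0 = mat n n (\<lambda>(j, q). x (Suc q) ^ j * (x (Suc q) - x 0))"
    by (rule eq_matI) (auto simp: mat_delete_def C_def)
  finally show ?thesis unfolding M_def .
qed

theorem det_vandermonde_mat:
  fixes x :: "nat \<Rightarrow> 'a :: comm_ring_1"
  shows "det (mat n n (\<lambda>(j, q). x q ^ j)) = (\<Prod>q<n. \<Prod>p<q. x q - x p)"
proof (induction n arbitrary: x)
  case 0
  then show ?case by (simp add: det_def)
next
  case (Suc n x)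
  have "det (mat (Suc n) (Suc n) (\<lambda>(j, q). x q ^ j)) =
        (\<Prod>q<n. x (Suc q) - x 0) * det (mat n n (\<lambda>(j, q). x (Suc q) ^ j))"
    unfolding det_vandermonde_reduce by (rule det_mat_col_scale)
  also have "\<dots> = (\<Prod>q<n. x (Suc q) - x 0) * (\<Prod>q<n. \<Prod>p<q. x (Suc q) - x (Suc p))"
    using Suc.IH[of "\<lambda>q. x (Suc q)"] by simp
  also have "\<dots> = (\<Prod>q<Suc n. \<Prod>p<q. x q - x p)"
    by (simp only: prod.lessThan_Suc_shift prod.distrib) simp
  finally show ?case .
qed

abbreviation circ :: "real \<Rightarrow> complex" where
  "circ t \<equiv> exp (2 * of_real pi * \<i> * of_real t)"

abbreviation log_chord :: "real \<Rightarrow> real \<Rightarrow> real" where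
  "log_chord s t \<equiv> ln (cmod (circ s - circ t))"

lemma vandermonde_carrier: "vandermonde N N \<theta> \<in> carrier_mat N N"
  by (simp add: vandermonde_def)

lemma det_vandermonde:
  "det (vandermonde N N \<theta>) =
     complex_of_real (1 / sqrt (real N)) ^ N * (\<Prod>q<N. \<Prod>p<q. circ (\<theta> q) - circ (\<theta> p))"
proof -
  have "vandermonde N N \<theta> = complex_of_real (1 / sqrt (real N)) \<cdot>\<^sub>m mat N N (\<lambda>(j, q). circ (\<theta> q) ^ j)"
  proof (rule eq_matI)
    fix i j assume "i < dim_row (complex_of_real (1 / sqrt (real N)) \<cdot>\<^sub>m mat N N (\<lambda>(j, q). circ (\<theta> q) ^ j))"
      "j < dim_col (complex_of_real (1 / sqrt (real N)) \<cdot>\<^sub>m mat N N (\<lambda>(j, q). circ (\<theta> q) ^ j))"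
    then have i: "i < N" and j: "j < N" by auto
    have "exp (2 * of_real pi * \<i> * of_nat i * of_real (\<theta> j)) = circ (\<theta> j) ^ i"
      by (simp add: exp_of_nat_mult[symmetric] mult_ac)
    then show "vandermonde N N \<theta> $$ (i, j) =
        (complex_of_real (1 / sqrt (real N)) \<cdot>\<^sub>m mat N N (\<lambda>(j, q). circ (\<theta> q) ^ j)) $$ (i, j)"
      using i j by (simp add: vandermonde_def divide_inverse mult.commute)
  qed (auto simp: vandermonde_def)
  then show ?thesis by (simp add: det_vandermonde_mat)
qed

lemma tr_N_log_vandermonde_distinct:
  assumes N: "N \<ge> 1" and distinct: "\<forall>q<N. \<forall>p<q. circ (\<theta> q) \<noteq> circ (\<theta> p)"
  shows "tr_N (matrix_log (mat_adjoint (vandermonde N N \<theta>) * vandermonde N N \<theta>)) =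
    complex_of_real (- ln (real N) + 2 / real N * (\<Sum>q<N. \<Sum>p<q. log_chord (\<theta> q) (\<theta> p)))"
proof -
  define c where "c = 1 / sqrt (real N)"
  have cpos: "c > 0" unfolding c_def using N by simp
  have pos: "0 < cmod (circ (\<theta> q) - circ (\<theta> p))" if "q < N" "p < q" for q p
    using distinct that by auto
  have "det (vandermonde N N \<theta>) \<noteq> 0"
    unfolding det_vandermonde using distinct N by auto
  then have "tr_N (matrix_log (mat_adjoint (vandermonde N N \<theta>) * vandermonde N N \<theta>)) =
      complex_of_real (2 * ln (cmod (det (vandermonde N N \<theta>)))) / of_nat N"
    by (rule tr_N_matrix_log_gram[OF vandermonde_carrier])
  also have "cmod (det (vandermonde N N \<theta>)) = c ^ N * (\<Prod>q<N. \<Prod>p<q. cmod (circ (\<theta> q) - circ (\<theta> p)))"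
    unfolding det_vandermonde c_def using N by (simp add: norm_mult norm_power norm_divide prod_norm)
  also have "ln \<dots> = real N * ln c + (\<Sum>q<N. \<Sum>p<q. log_chord (\<theta> q) (\<theta> p))"
  proof -
    have "ln (\<Prod>q<N. \<Prod>p<q. cmod (circ (\<theta> q) - circ (\<theta> p))) =
          (\<Sum>q<N. ln (\<Prod>p<q. cmod (circ (\<theta> q) - circ (\<theta> p))))"
      using pos by (subst ln_prod) (auto intro!: prod_pos)
    also have "\<dots> = (\<Sum>q<N. \<Sum>p<q. log_chord (\<theta> q) (\<theta> p))"
      using pos by (intro sum.cong refl) (subst ln_prod, auto)
    finally show ?thesis using cpos pos by (simp add: ln_mult ln_realpow prod_pos)
  qed
  also have "ln c = - ln (real N) / 2" unfolding c_def using N by (simp add: ln_div ln_sqrt)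
  finally have tr: "tr_N (matrix_log (mat_adjoint (vandermonde N N \<theta>) * vandermonde N N \<theta>)) =
      complex_of_real (2 * (real N * (- ln (real N) / 2) + (\<Sum>q<N. \<Sum>p<q. log_chord (\<theta> q) (\<theta> p))))
      / of_nat N" .
  have r: "2 * (real N * (- ln (real N) / 2) + S) / real N = - ln (real N) + 2 / real N * S" for S
    using N by (simp add: field_simps)
  show ?thesis unfolding tr r[symmetric] by simp
qed

lemma tr_N_log_vandermonde_degenerate:
  assumes "\<not> (\<forall>q<N. \<forall>p<q. circ (\<theta> q) \<noteq> circ (\<theta> p))"
  shows "tr_N (matrix_log (mat_adjoint (vandermonde N N \<theta>) * vandermonde N N \<theta>)) = tr_N (SOME L. False)"
proof -
  have "det (vandermonde N N \<theta>) = 0" unfolding det_vandermonde using assms by auto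
  then have "det (mat_adjoint (vandermonde N N \<theta>) * vandermonde N N \<theta>) = 0"
    using vandermonde_carrier[of N \<theta>] by (simp add: det_mult[of _ N] det_mat_adjoint)
  moreover have "mat_adjoint (vandermonde N N \<theta>) * vandermonde N N \<theta> \<in> carrier_mat N N"
    using vandermonde_carrier[of N \<theta>] by auto
  ultimately show ?thesis by (simp add: matrix_log_singular)
qed

lemma tr_N_log_vandermonde:
  assumes "N \<ge> 1"
  shows "tr_N (matrix_log (mat_adjoint (vandermonde N N \<theta>) * vandermonde N N \<theta>)) =
    (if \<forall>q<N. \<forall>p<q. circ (\<theta> q) \<noteq> circ (\<theta> p)
     then complex_of_real (- ln (real N) + 2 / real N * (\<Sum>q<N. \<Sum>p<q. log_chord (\<theta> q) (\<theta> p)))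
     else tr_N (SOME L. False))"
  using tr_N_log_vandermonde_distinct[OF assms] tr_N_log_vandermonde_degenerate by auto

section \<open>The logarithmic chord kernel on the circle\<close>

lemma cmod_circ_diff: "cmod (circ s - circ t) = 2 * \<bar>sin (pi * (s - t))\<bar>"
proof -
  define a where "a = 2 * pi * s"
  define b where "b = 2 * pi * t"
  have ab: "a - b = 2 * (pi * (s - t))" unfolding a_def b_def by (simp add: algebra_simps)
  have circ: "circ x = Complex (cos (2 * pi * x)) (sin (2 * pi * x))" for x
  proof -
    have "2 * of_real pi * \<i> * of_real x = \<i> * complex_of_real (2 * pi * x)" by simp
    then show ?thesis by (simp only: cis_conv_exp[symmetric] cis.ctr)
  qed
  have "(cmod (circ s - circ t))\<^sup>2 = (cos a - cos b)\<^sup>2 + (sin a - sin b)\<^sup>2"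
    unfolding circ a_def b_def by (simp add: cmod_def)
  also have "\<dots> = 2 - 2 * cos (a - b)"
    unfolding cos_diff power2_diff using sin_cos_squared_add[of a] sin_cos_squared_add[of b]
    by (simp add: algebra_simps)
  also have "\<dots> = (2 * \<bar>sin (pi * (s - t))\<bar>)\<^sup>2"
    unfolding ab by (simp add: cos_double_sin power2_eq_square)
  finally show ?thesis by (rule power2_eq_imp_eq) auto
qed

text \<open>Chords have length at most 2.\<close>

lemma log_chord_le_ln2: "log_chord s t \<le> ln 2"
proof (cases "cmod (circ s - circ t) = 0")
  case False
  then show ?thesis by (simp add: cmod_circ_diff)
qed simp

text \<open>A weak form of Jordan's inequality, from the cubic Taylor bound for the sine.\<close>

lemma sin_ge_half: assumes "0 \<le> x" "x \<le> pi / 2" shows "x / 2 \<le> sin x"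
proof -
  have "\<bar>sin x - (\<Sum>m<3. sin_coeff m * x ^ m)\<bar> \<le> inverse (fact 3) * \<bar>x\<bar> ^ 3"
    by (rule Maclaurin_sin_bound)
  moreover have "(\<Sum>m<3. sin_coeff m * x ^ m) = x"
    by (simp add: sin_coeff_def eval_nat_numeral)
  ultimately have "\<bar>sin x - x\<bar> \<le> inverse 6 * x ^ 3" using assms by (simp add: eval_nat_numeral)
  moreover have "x ^ 3 / 6 = inverse 6 * x ^ 3" by simp
  ultimately have taylor: "x - x ^ 3 / 6 \<le> sin x" unfolding abs_le_iff by linarith
  have "x \<le> 1.6" using assms pi_approx by simp
  then have "x * x \<le> 1.6 * 1.6" using assms by (intro mult_mono) auto
  then have "x * (x * x) \<le> x * 3" using assms by (intro mult_left_mono) auto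
  then have "x ^ 3 / 6 \<le> x / 2" by (simp add: power3_eq_cube)
  with taylor show ?thesis by linarith
qed

lemma abs_sin_pi_ge_dist:
  assumes "-1 \<le> u" "u \<le> 1"
  shows "min \<bar>u\<bar> (min \<bar>u - 1\<bar> \<bar>u + 1\<bar>) \<le> \<bar>sin (pi * u)\<bar>"
proof -
  have pc: "c \<le> pi * c / 2" if "0 \<le> c" for c
    using mult_right_mono[OF pi_ge_two that] by linarith
  have unit: "min a (1 - a) \<le> sin (pi * a)" if "0 \<le> a" "a \<le> 1" for a
  proof (cases "a \<le> 1/2")
    case True
    have "pi * a / 2 \<le> sin (pi * a)" using True that by (intro sin_ge_half) auto
    then show ?thesis using pc that by fastforce
  next
    case False
    have "pi * (1 - a) / 2 \<le> sin (pi * (1 - a))" using False that by (intro sin_ge_half) auto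
    moreover have "sin (pi * (1 - a)) = sin (pi * a)" by (simp add: algebra_simps sin_diff)
    ultimately show ?thesis using pc[of "1 - a"] that by fastforce
  qed
  show ?thesis
  proof (cases "u \<ge> 0")
    case True
    then have "min u (1 - u) \<le> sin (pi * u)" using unit assms by auto
    moreover have "sin (pi * u) \<ge> 0" using True assms by (intro sin_ge_zero) auto
    ultimately show ?thesis using True assms by auto
  next
    case False
    then have "min (-u) (1 + u) \<le> sin (pi * (-u))" using unit[of "-u"] assms by auto
    then show ?thesis using False assms by auto
  qed
qed

text \<open>The singularity of \<open>- ln |circ s - circ t|\<close> on the diagonal (and at the corners of the
  unit square) is dominated by integrable inverse square roots.\<close>

lemma neg_log_chord_bound:
  assumes s: "0 \<le> s" "s \<le> 1" and t: "0 \<le> t" "t \<le> 1"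
  shows "max 0 (- log_chord s t)
    \<le> 2 * (\<bar>s - t\<bar> powr (-(1/2)) + \<bar>s - t - 1\<bar> powr (-(1/2)) + \<bar>s - t + 1\<bar> powr (-(1/2)))"
    (is "_ \<le> ?R")
proof (cases "cmod (circ s - circ t) = 0")
  case True
  then show ?thesis by simp
next
  case False
  define r where "r = cmod (circ s - circ t)"
  define d where "d = min \<bar>s - t\<bar> (min \<bar>s - t - 1\<bar> \<bar>s - t + 1\<bar>)"
  have rpos: "r > 0" using False unfolding r_def by simp
  have r: "r = 2 * \<bar>sin (pi * (s - t))\<bar>" unfolding r_def by (rule cmod_circ_diff)
  have dr: "d \<le> r" using abs_sin_pi_ge_dist[of "s - t"] s t r unfolding d_def by linarith
  have dpos: "d > 0"
  proof (rule ccontr)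
    assume "\<not> d > 0"
    then have "s - t = 0 \<or> s - t = 1 \<or> s - t = -1" unfolding d_def by (auto simp: min_def split: if_splits)
    then have "sin (pi * (s - t)) = 0" by auto
    then show False using rpos r by simp
  qed
  define q where "q = d powr (-(1/2))"
  have qpos: "q > 0" unfolding q_def using dpos by simp
  have "- ln r \<le> - ln d" using dpos dr by simp
  also have "\<dots> = 2 * ln q" unfolding q_def using dpos by (simp add: ln_powr)
  also have "\<dots> < 2 * q" using ln_less_self[OF qpos] by simp
  also have "q \<le> \<bar>s - t\<bar> powr (-(1/2)) + \<bar>s - t - 1\<bar> powr (-(1/2)) + \<bar>s - t + 1\<bar> powr (-(1/2))"
    unfolding q_def d_def by (auto simp: min_def)
  finally show ?thesis using qpos unfolding r_def by simp
qed

lemma nn_integral_inv_sqrt_finite: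
  "(\<integral>\<^sup>+ y. ennreal (indicator {-2..2} y * \<bar>y\<bar> powr (-(1/2))) \<partial>lborel) < \<infinity>"
proof -
  define g where "g y = ennreal (indicator {0..2} y * y powr (-(1/2)))" for y :: real
  have gm: "g \<in> borel_measurable borel" unfolding g_def by measurable
  have "(\<lambda>x. x powr (-(1/2))) integrable_on {0..2::real}" by (rule integrable_on_powr_from_0) auto
  then have "((\<lambda>x. x powr (-(1/2))) has_integral integral {0..2::real} (\<lambda>x. x powr (-(1/2)))) {0..2}"
    by (rule integrable_integral)
  then have "(\<integral>\<^sup>+ y. g y \<partial>lborel) = ennreal (integral {0..2::real} (\<lambda>x. x powr (-(1/2))))"
    unfolding g_def by (rule nn_integral_has_integral_lebesgue[rotated]) auto
  then have g_fin: "(\<integral>\<^sup>+ y. g y \<partial>lborel) < \<infinity>" by simp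
  have "(\<integral>\<^sup>+ y. ennreal (indicator {-2..2} y * \<bar>y\<bar> powr (-(1/2))) \<partial>lborel)
      \<le> (\<integral>\<^sup>+ y. g y + g (0 + (-1) * y) \<partial>lborel)"
    unfolding g_def by (intro nn_integral_mono) (auto simp: indicator_def)
  also have "\<dots> = (\<integral>\<^sup>+ y. g y \<partial>lborel) + (\<integral>\<^sup>+ y. g (0 + (-1) * y) \<partial>lborel)"
    by (rule nn_integral_add) (use gm in auto)
  also have "(\<integral>\<^sup>+ y. g (0 + (-1) * y) \<partial>lborel) = (\<integral>\<^sup>+ y. g y \<partial>lborel)"
    using nn_integral_real_affine[OF gm, of "-1" 0] by simp
  finally show ?thesis using g_fin by (simp add: ennreal_add_less_top le_less_trans)
qed

lemma nn_integral_inv_sqrt_shift_le: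
  assumes s: "0 \<le> s" "s \<le> 1" and c: "\<bar>c\<bar> \<le> 1"
  shows "(\<integral>\<^sup>+ t. ennreal (indicator {0..1} t * \<bar>s + c - t\<bar> powr (-(1/2))) \<partial>lborel)
    \<le> (\<integral>\<^sup>+ y. ennreal (indicator {-2..2} y * \<bar>y\<bar> powr (-(1/2))) \<partial>lborel)"
proof -
  define g where "g y = ennreal (indicator {-2..2} y * \<bar>y\<bar> powr (-(1/2)))" for y :: real
  have gm: "g \<in> borel_measurable borel" unfolding g_def by measurable
  have "(\<integral>\<^sup>+ t. ennreal (indicator {0..1} t * \<bar>s + c - t\<bar> powr (-(1/2))) \<partial>lborel)
      \<le> (\<integral>\<^sup>+ t. g ((s + c) + (-1) * t) \<partial>lborel)"
    using s c unfolding g_def by (intro nn_integral_mono) (auto simp: indicator_def)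
  also have "\<dots> = (\<integral>\<^sup>+ y. g y \<partial>lborel)"
    using nn_integral_real_affine[OF gm, of "-1" "s + c"] by simp
  finally show ?thesis unfolding g_def .
qed

lemma nn_integral_neg_log_chord_le:
  assumes s: "0 \<le> s" "s \<le> 1"
  defines "J \<equiv> \<integral>\<^sup>+ y. ennreal (indicator {-2..2} y * \<bar>y\<bar> powr (-(1/2))) \<partial>lborel"
  shows "(\<integral>\<^sup>+ t. indicator {0..1} t * ennreal (max 0 (- log_chord s t)) \<partial>lborel) \<le> 6 * J"
proof -
  define E where "E c t = ennreal (indicator {0..1} t * \<bar>s + c - t\<bar> powr (-(1/2)))" for c t :: real
  have Em: "E c \<in> borel_measurable borel" for c unfolding E_def by measurable
  have "(\<integral>\<^sup>+ t. indicator {0..1} t * ennreal (max 0 (- log_chord s t)) \<partial>lborel)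
      \<le> (\<integral>\<^sup>+ t. 2 * (E 0 t + E (-1) t + E 1 t) \<partial>lborel)"
  proof (intro nn_integral_mono)
    fix t
    show "indicator {0..1} t * ennreal (max 0 (- log_chord s t)) \<le> 2 * (E 0 t + E (-1) t + E 1 t)"
    proof (cases "t \<in> {0..1}")
      case True
      have E: "E 0 t = ennreal (\<bar>s - t\<bar> powr (-(1/2)))" "E (-1) t = ennreal (\<bar>s - t - 1\<bar> powr (-(1/2)))"
        "E 1 t = ennreal (\<bar>s - t + 1\<bar> powr (-(1/2)))"
        unfolding E_def using True by (simp_all add: algebra_simps)
      have "indicator {0..1} t * ennreal (max 0 (- log_chord s t)) = ennreal (max 0 (- log_chord s t))"
        using True by simp
      also have "\<dots> \<le> ennreal (2 * (\<bar>s - t\<bar> powr (-(1/2)) + \<bar>s - t - 1\<bar> powr (-(1/2)) + \<bar>s - t + 1\<bar> powr (-(1/2))))"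
        using neg_log_chord_bound[of s t] s True by (intro ennreal_leI) simp
      also have "\<dots> = 2 * (E 0 t + E (-1) t + E 1 t)"
        unfolding E by (simp only: ennreal_plus[symmetric] powr_ge_zero add_nonneg_nonneg
            ennreal_mult'[symmetric] ennreal_numeral[symmetric])
      finally show ?thesis .
    qed simp
  qed
  also have "\<dots> = 2 * ((\<integral>\<^sup>+ t. E 0 t \<partial>lborel) + (\<integral>\<^sup>+ t. E (-1) t \<partial>lborel) + (\<integral>\<^sup>+ t. E 1 t \<partial>lborel))"
    using Em by (simp add: nn_integral_cmult nn_integral_add)
  also have "\<dots> \<le> 2 * (J + J + J)"
    using nn_integral_inv_sqrt_shift_le[OF s, of 0] nn_integral_inv_sqrt_shift_le[OF s, of "-1"]
      nn_integral_inv_sqrt_shift_le[OF s, of 1]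
    unfolding E_def J_def by (intro mult_left_mono add_mono) auto
  also have "\<dots> = 6 * J" by (simp only: distrib_left distrib_right[symmetric]) simp
  finally show ?thesis .
qed

section \<open>Phases with a continuous density\<close>

lemma circ_eq_imp_int_diff:
  assumes "circ s = circ t"
  shows "\<exists>k::int. t = s + of_int k"
proof -
  have "exp (2 * of_real pi * \<i> * of_real s - 2 * of_real pi * \<i> * of_real t) = 1"
    using assms by (simp add: exp_diff)
  then obtain n :: int where "Im (2 * of_real pi * \<i> * of_real s - 2 * of_real pi * \<i> * of_real t) = of_int (2 * n) * pi"
    unfolding exp_eq_1 by blast
  then have "pi * (2 * (s - t) - 2 * of_int n) = 0" by (simp add: algebra_simps)
  then have "s - t = of_int n" using pi_gt_zero by simp
  then show ?thesis by (intro exI[of _ "- n"]) simp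
qed

lemma distr_PiM_pair:
  fixes M :: "'a measure"
  assumes M: "prob_space M" and I: "finite I" "q \<in> I" "p \<in> I" "q \<noteq> p"
  shows "distr (PiM I (\<lambda>_. M)) (M \<Otimes>\<^sub>M M) (\<lambda>\<theta>. (\<theta> q, \<theta> p)) = M \<Otimes>\<^sub>M M"
proof -
  interpret M: prob_space M by fact
  interpret P: product_prob_space "\<lambda>_::'b. M"
    unfolding product_prob_space_def product_prob_space_axioms_def product_sigma_finite_def
    using M M.sigma_finite_measure_axioms by simp
  have meas: "(\<lambda>\<theta>. (\<theta> q, \<theta> p)) \<in> PiM I (\<lambda>_. M) \<rightarrow>\<^sub>M M \<Otimes>\<^sub>M M" using I by measurable
  show ?thesis
  proof (rule pair_measure_eqI[symmetric])
    show "sigma_finite_measure M" by (rule M.sigma_finite_measure_axioms)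
    show "sigma_finite_measure M" by (rule M.sigma_finite_measure_axioms)
    show "sets (M \<Otimes>\<^sub>M M) = sets (distr (PiM I (\<lambda>_. M)) (M \<Otimes>\<^sub>M M) (\<lambda>\<theta>. (\<theta> q, \<theta> p)))" by simp
    fix A B assume A: "A \<in> sets M" and B: "B \<in> sets M"
    define X where "X i = (if i = q then A else B)" for i
    have "emeasure (distr (PiM I (\<lambda>_. M)) (M \<Otimes>\<^sub>M M) (\<lambda>\<theta>. (\<theta> q, \<theta> p))) (A \<times> B)
        = emeasure (PiM I (\<lambda>_. M)) ((\<lambda>\<theta>. (\<theta> q, \<theta> p)) -` (A \<times> B) \<inter> space (PiM I (\<lambda>_. M)))"
      using A B by (intro emeasure_distr[OF meas]) auto
    also have "(\<lambda>\<theta>. (\<theta> q, \<theta> p)) -` (A \<times> B) \<inter> space (PiM I (\<lambda>_. M)) =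
        {x \<in> space (PiM I (\<lambda>_. M)). \<forall>i\<in>{q, p}. x i \<in> X i}"
      unfolding X_def using I by auto
    also have "emeasure (PiM I (\<lambda>_. M)) \<dots> = (\<Prod>i\<in>{q, p}. emeasure M (X i))"
      using I A B by (intro P.emeasure_PiM_Collect) (auto simp: X_def)
    also have "\<dots> = emeasure M A * emeasure M B" using I by (simp add: X_def)
    finally show "emeasure M A * emeasure M B =
        emeasure (distr (PiM I (\<lambda>_. M)) (M \<Otimes>\<^sub>M M) (\<lambda>\<theta>. (\<theta> q, \<theta> p))) (A \<times> B)" ..
  qed
qed

locale phase_density =
  fixes f :: "real \<Rightarrow> real" and \<nu> :: "real measure"
  assumes f_cont: "continuous_on {0..1} f"
    and f_nonneg: "\<And>x. x \<in> {0..1} \<Longrightarrow> f x \<ge> 0"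
    and f_int: "integral {0..1} f = 1"
    and nu_def: "\<nu> = density lborel (\<lambda>x. ennreal (f x * indicator {0..1} x))"
begin

lemma density_measurable: "(\<lambda>x. ennreal (f x * indicator {0..1} x)) \<in> borel_measurable borel"
proof -
  have "(\<lambda>x. indicator {0..1} x *\<^sub>R f x) \<in> borel_measurable borel"
    by (rule borel_measurable_continuous_on_indicator[OF _ f_cont]) auto
  then show ?thesis by (simp add: mult.commute)
qed

lemma sets_nu [measurable_cong]: "sets \<nu> = sets borel"
  unfolding nu_def by simp

lemma space_nu [simp]: "space \<nu> = UNIV"
  unfolding nu_def by simp

lemma prob_space_nu: "prob_space \<nu>"
proof
  have "(f has_integral 1) {0..1}"
    using integrable_continuous_interval[OF f_cont] f_int by (metis integrable_integral)
  then have "(\<integral>\<^sup>+ x. ennreal (indicator {0..1} x * f x) \<partial>lborel) = ennreal 1"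
    by (rule nn_integral_has_integral_lebesgue[rotated]) (use f_nonneg in auto)
  then show "emeasure \<nu> (space \<nu>) = 1"
    unfolding nu_def using density_measurable by (simp add: emeasure_density mult.commute)
qed

lemma AE_nu_unit_interval: "AE x in \<nu>. x \<in> {0..1}"
  unfolding nu_def using density_measurable by (subst AE_density) (auto simp: indicator_def)

lemma density_bounded: "\<exists>B>0. \<forall>x\<in>{0..1}. f x \<le> B"
proof -
  obtain x0 where "x0 \<in> {0..1::real}" "\<forall>y\<in>{0..1}. f y \<le> f x0"
    using continuous_attains_sup[OF compact_Icc _ f_cont] by auto
  then show ?thesis by (intro exI[of _ "max 1 (f x0)"]) auto
qed

lemma nn_integral_nu_le:
  assumes g: "g \<in> borel_measurable borel" and B: "\<forall>x\<in>{0..1}. f x \<le> B" "B > 0"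
  shows "(\<integral>\<^sup>+ x. g x \<partial>\<nu>) \<le> ennreal B * (\<integral>\<^sup>+ x. indicator {0..1} x * g x \<partial>lborel)"
proof -
  have "(\<integral>\<^sup>+ x. g x \<partial>\<nu>) = (\<integral>\<^sup>+ x. ennreal (f x * indicator {0..1} x) * g x \<partial>lborel)"
    unfolding nu_def by (rule nn_integral_density) (use density_measurable g in auto)
  also have "\<dots> \<le> (\<integral>\<^sup>+ x. ennreal B * (indicator {0..1} x * g x) \<partial>lborel)"
  proof (intro nn_integral_mono)
    fix x
    show "ennreal (f x * indicator {0..1} x) * g x \<le> ennreal B * (indicator {0..1} x * g x)"
      using B by (cases "x \<in> {0..1}") (auto intro!: mult_right_mono ennreal_leI)
  qed
  also have "\<dots> = ennreal B * (\<integral>\<^sup>+ x. indicator {0..1} x * g x \<partial>lborel)"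
    by (rule nn_integral_cmult) (use g in measurable)
  finally show ?thesis .
qed

lemma log_chord_measurable: "(\<lambda>(s, t). log_chord s t) \<in> borel_measurable (\<nu> \<Otimes>\<^sub>M \<nu>)"
  by measurable

text \<open>The negative part of the kernel has finite integral against \<open>\<nu> \<Otimes> \<nu>\<close>: the
  inner integral is bounded uniformly in the outer variable.\<close>

lemma nn_integral_neg_log_chord_finite:
  "(\<integral>\<^sup>+ z. ennreal (max 0 (- (\<lambda>(s, t). log_chord s t) z)) \<partial>(\<nu> \<Otimes>\<^sub>M \<nu>)) < \<infinity>"
proof -
  interpret nu: prob_space \<nu> by (rule prob_space_nu)
  obtain B where B: "B > 0" "\<forall>x\<in>{0..1}. f x \<le> B" using density_bounded by auto
  define J where "J = (\<integral>\<^sup>+ y. ennreal (indicator {-2..2} y * \<bar>y\<bar> powr (-(1/2))) \<partial>lborel)"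
  have inner: "(\<integral>\<^sup>+ t. ennreal (max 0 (- log_chord s t)) \<partial>\<nu>) \<le> ennreal B * (6 * J)"
    if s: "0 \<le> s" "s \<le> 1" for s
  proof -
    have "(\<integral>\<^sup>+ t. ennreal (max 0 (- log_chord s t)) \<partial>\<nu>)
        \<le> ennreal B * (\<integral>\<^sup>+ t. indicator {0..1} t * ennreal (max 0 (- log_chord s t)) \<partial>lborel)"
      by (rule nn_integral_nu_le[OF _ B(2,1)]) measurable
    also have "\<dots> \<le> ennreal B * (6 * J)"
      unfolding J_def by (intro mult_left_mono nn_integral_neg_log_chord_le s) auto
    finally show ?thesis .
  qed
  have "(\<integral>\<^sup>+ z. ennreal (max 0 (- (\<lambda>(s, t). log_chord s t) z)) \<partial>(\<nu> \<Otimes>\<^sub>M \<nu>))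
      = (\<integral>\<^sup>+ s. (\<integral>\<^sup>+ t. ennreal (max 0 (- (\<lambda>(s, t). log_chord s t) (s, t))) \<partial>\<nu>) \<partial>\<nu>)"
    by (rule sigma_finite_measure.nn_integral_fst[symmetric, OF prob_space_imp_sigma_finite[OF prob_space_nu]])
      measurable
  also have "\<dots> \<le> (\<integral>\<^sup>+ s. ennreal B * (6 * J) \<partial>\<nu>)"
    by (intro nn_integral_mono_AE, use AE_nu_unit_interval in eventually_elim) (unfold prod.case, rule inner, auto)
  also have "\<dots> = ennreal B * (6 * J)" using nu.emeasure_space_1 by simp
  also have "\<dots> < \<infinity>"
    using nn_integral_inv_sqrt_finite unfolding J_def by (simp add: ennreal_mult_less_top)
  finally show ?thesis .
qed

text \<open>The kernel is bounded above by \<open>ln 2\<close>, so integrability reduces to its negative part.\<close>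

lemma integrable_log_chord: "integrable (\<nu> \<Otimes>\<^sub>M \<nu>) (\<lambda>(s, t). log_chord s t)"
proof (rule integrableI_bounded)
  let ?H = "\<lambda>(s, t). log_chord s t"
  interpret nn: prob_space "\<nu> \<Otimes>\<^sub>M \<nu>" by (intro prob_space_pair prob_space_nu)
  show "?H \<in> borel_measurable (\<nu> \<Otimes>\<^sub>M \<nu>)" by (rule log_chord_measurable)
  have "(\<integral>\<^sup>+ z. ennreal (norm (?H z)) \<partial>(\<nu> \<Otimes>\<^sub>M \<nu>))
      \<le> (\<integral>\<^sup>+ z. ennreal (ln 2) + ennreal (max 0 (- ?H z)) \<partial>(\<nu> \<Otimes>\<^sub>M \<nu>))"
  proof (intro nn_integral_mono)
    fix z :: "real \<times> real"
    have "?H z \<le> ln 2" using log_chord_le_ln2 by (simp split: prod.split)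
    moreover have "0 \<le> ln (2::real)" by simp
    ultimately have "norm (?H z) \<le> ln 2 + max 0 (- ?H z)" by (simp add: abs_if max_def)
    then have "ennreal (norm (?H z)) \<le> ennreal (ln 2 + max 0 (- ?H z))" by (rule ennreal_leI)
    also have "\<dots> = ennreal (ln 2) + ennreal (max 0 (- ?H z))" by (rule ennreal_plus) auto
    finally show "ennreal (norm (?H z)) \<le> ennreal (ln 2) + ennreal (max 0 (- ?H z))" .
  qed
  also have "\<dots> = ennreal (ln 2) + (\<integral>\<^sup>+ z. ennreal (max 0 (- ?H z)) \<partial>(\<nu> \<Otimes>\<^sub>M \<nu>))"
    using log_chord_measurable nn.emeasure_space_1 by (subst nn_integral_add) auto
  also have "\<dots> < \<infinity>" using nn_integral_neg_log_chord_finite by simp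
  finally show "(\<integral>\<^sup>+ z. ennreal (norm (?H z)) \<partial>(\<nu> \<Otimes>\<^sub>M \<nu>)) < \<infinity>" .
qed

text \<open>Two independent phases give distinct points almost surely: for fixed \<open>s\<close>, the
  coincidence set \<open>s + \<int>\<close> is countable and hence \<open>\<nu>\<close>-null.\<close>

lemma AE_circ_pair_distinct: "AE z in \<nu> \<Otimes>\<^sub>M \<nu>. circ (fst z) \<noteq> circ (snd z)"
proof -
  interpret nu: prob_space \<nu> by (rule prob_space_nu)
  interpret ps: pair_sigma_finite \<nu> \<nu>
    unfolding pair_sigma_finite_def using nu.sigma_finite_measure_axioms by simp
  have "AE s in \<nu>. AE t in \<nu>. circ (fst (s, t)) \<noteq> circ (snd (s, t))"
  proof (rule AE_I2)
    fix s :: real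
    define Z where "Z = range (\<lambda>k::int. s + of_int k)"
    have "Z \<in> null_sets lborel" unfolding Z_def by (intro countable_imp_null_set_lborel) auto
    then have "AE t in lborel. t \<notin> Z" by (rule AE_not_in)
    then have "AE t in \<nu>. t \<notin> Z" unfolding nu_def using density_measurable
      by (subst AE_density) (auto elim: eventually_mono)
    then show "AE t in \<nu>. circ (fst (s, t)) \<noteq> circ (snd (s, t))"
      by (rule eventually_mono) (use circ_eq_imp_int_diff[of s] in \<open>auto simp: Z_def\<close>)
  qed
  then show ?thesis by (intro ps.AE_pair_measure) measurable
qed

end

section \<open>Expectation of the normalised log-determinant\<close>

context phase_density
begin

lemma pair_of_phases:
  fixes N :: nat
  assumes q: "q < N" and p: "p < N" and qp: "q \<noteq> p"
  shows "AE \<theta> in PiM {..<N} (\<lambda>_. \<nu>). circ (\<theta> q) \<noteq> circ (\<theta> p)"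
    and "integrable (PiM {..<N} (\<lambda>_. \<nu>)) (\<lambda>\<theta>. log_chord (\<theta> q) (\<theta> p))"
    and "(\<integral>\<theta>. log_chord (\<theta> q) (\<theta> p) \<partial>PiM {..<N} (\<lambda>_. \<nu>)) = (\<integral>(s, t). log_chord s t \<partial>(\<nu> \<Otimes>\<^sub>M \<nu>))"
proof -
  let ?P = "PiM {..<N} (\<lambda>_. \<nu>)" and ?H = "\<lambda>(s, t). log_chord s t"
  have law: "distr ?P (\<nu> \<Otimes>\<^sub>M \<nu>) (\<lambda>\<theta>. (\<theta> q, \<theta> p)) = \<nu> \<Otimes>\<^sub>M \<nu>"
    using q p qp by (intro distr_PiM_pair prob_space_nu) auto
  have meas: "(\<lambda>\<theta>. (\<theta> q, \<theta> p)) \<in> ?P \<rightarrow>\<^sub>M \<nu> \<Otimes>\<^sub>M \<nu>"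
    by (intro measurable_Pair measurable_component_singleton) (use q p in auto)
  have sets: "{z \<in> space (\<nu> \<Otimes>\<^sub>M \<nu>). circ (fst z) \<noteq> circ (snd z)} \<in> sets (\<nu> \<Otimes>\<^sub>M \<nu>)"
    by measurable
  have "AE z in distr ?P (\<nu> \<Otimes>\<^sub>M \<nu>) (\<lambda>\<theta>. (\<theta> q, \<theta> p)). circ (fst z) \<noteq> circ (snd z)"
    unfolding law by (rule AE_circ_pair_distinct)
  then show "AE \<theta> in ?P. circ (\<theta> q) \<noteq> circ (\<theta> p)"
    using AE_distr_iff[OF meas sets] by simp
  have "integrable (distr ?P (\<nu> \<Otimes>\<^sub>M \<nu>) (\<lambda>\<theta>. (\<theta> q, \<theta> p))) ?H"
    unfolding law by (rule integrable_log_chord)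
  then show "integrable ?P (\<lambda>\<theta>. log_chord (\<theta> q) (\<theta> p))"
    using integrable_distr_eq[OF meas log_chord_measurable] by simp
  show "(\<integral>\<theta>. log_chord (\<theta> q) (\<theta> p) \<partial>?P) = (\<integral>z. ?H z \<partial>(\<nu> \<Otimes>\<^sub>M \<nu>))"
    using integral_distr[OF meas log_chord_measurable] unfolding law by simp
qed

lemma AE_distinct_points:
  fixes N :: nat
  shows "AE \<theta> in PiM {..<N} (\<lambda>_. \<nu>). \<forall>q<N. \<forall>p<q. circ (\<theta> q) \<noteq> circ (\<theta> p)"
proof -
  have "AE \<theta> in PiM {..<N} (\<lambda>_. \<nu>). circ (\<theta> q) \<noteq> circ (\<theta> p)" if "q < N" "p < q" for q p
    using that by (intro pair_of_phases(1)) auto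
  then have "\<forall>q\<in>{..<N}. \<forall>p\<in>{..<q}. AE \<theta> in PiM {..<N} (\<lambda>_. \<nu>). circ (\<theta> q) \<noteq> circ (\<theta> p)"
    by blast
  then have "AE \<theta> in PiM {..<N} (\<lambda>_. \<nu>). \<forall>q\<in>{..<N}. \<forall>p\<in>{..<q}. circ (\<theta> q) \<noteq> circ (\<theta> p)"
    by (simp only: AE_finite_all finite_lessThan)
  then show ?thesis by (simp only: Ball_def lessThan_iff)
qed

lemma distinct_points_measurable:
  fixes N :: nat
  shows "Measurable.pred (PiM {..<N} (\<lambda>_. \<nu>)) (\<lambda>\<theta>. \<forall>q<N. \<forall>p<q. circ (\<theta> q) \<noteq> circ (\<theta> p))"
proof -
  have circ_meas: "(\<lambda>\<theta>. circ (\<theta> q)) \<in> borel_measurable (PiM {..<N} (\<lambda>_. \<nu>))" if "q < N" for q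
  proof -
    have "(\<lambda>\<theta>. \<theta> q) \<in> PiM {..<N} (\<lambda>_. \<nu>) \<rightarrow>\<^sub>M \<nu>"
      using that by (intro measurable_component_singleton) auto
    moreover have "circ \<in> borel_measurable \<nu>" by measurable
    ultimately show ?thesis by (rule measurable_compose)
  qed
  have neq: "Measurable.pred (PiM {..<N} (\<lambda>_. \<nu>)) (\<lambda>\<theta>. circ (\<theta> q) \<noteq> circ (\<theta> p))"
    if "q < N" "p < N" for q p
  proof -
    have "Measurable.pred (PiM {..<N} (\<lambda>_. \<nu>)) (\<lambda>\<theta>. circ (\<theta> q) = circ (\<theta> p))"
      unfolding pred_def by (rule measurable_equality_set) (use circ_meas that in auto)
    then show ?thesis by (rule pred_intros_logic)
  qed
  have "Measurable.pred (PiM {..<N} (\<lambda>_. \<nu>)) (\<lambda>\<theta>. \<forall>q\<in>{..<N}. \<forall>p\<in>{..<q}. circ (\<theta> q) \<noteq> circ (\<theta> p))"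
    by (intro pred_intros_finite) (auto intro!: neq)
  then show ?thesis by (simp only: Ball_def lessThan_iff)
qed

lemma expectation_pair_sum:
  shows "integrable (PiM {..<N} (\<lambda>_. \<nu>)) (\<lambda>\<theta>. \<Sum>q<N. \<Sum>p<q. log_chord (\<theta> q) (\<theta> p))"
    and "(\<integral>\<theta>. (\<Sum>q<N. \<Sum>p<q. log_chord (\<theta> q) (\<theta> p)) \<partial>PiM {..<N} (\<lambda>_. \<nu>)) =
           real N * (real N - 1) / 2 * (\<integral>(s, t). log_chord s t \<partial>(\<nu> \<Otimes>\<^sub>M \<nu>))"
proof -
  let ?P = "PiM {..<N} (\<lambda>_. \<nu>)" and ?E = "\<integral>(s, t). log_chord s t \<partial>(\<nu> \<Otimes>\<^sub>M \<nu>)"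
  have int: "integrable ?P (\<lambda>\<theta>. log_chord (\<theta> q) (\<theta> p))"
    and val: "(\<integral>\<theta>. log_chord (\<theta> q) (\<theta> p) \<partial>?P) = ?E" if "q < N" "p < q" for q p
    using pair_of_phases(2,3)[of q N p] that by auto
  show "integrable ?P (\<lambda>\<theta>. \<Sum>q<N. \<Sum>p<q. log_chord (\<theta> q) (\<theta> p))"
    using int by (intro Bochner_Integration.integrable_sum) auto
  have "(\<integral>\<theta>. (\<Sum>q<N. \<Sum>p<q. log_chord (\<theta> q) (\<theta> p)) \<partial>?P) =
        (\<Sum>q<N. \<integral>\<theta>. (\<Sum>p<q. log_chord (\<theta> q) (\<theta> p)) \<partial>?P)"
    by (rule Bochner_Integration.integral_sum) (auto intro!: Bochner_Integration.integrable_sum int)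
  also have "\<dots> = (\<Sum>q<N. \<Sum>p<q. \<integral>\<theta>. log_chord (\<theta> q) (\<theta> p) \<partial>?P)"
    by (intro sum.cong refl Bochner_Integration.integral_sum) (auto intro: int)
  also have "\<dots> = (\<Sum>q<N. \<Sum>p<q. ?E)" by (intro sum.cong refl) (simp add: val)
  also have "\<dots> = (\<Sum>q<N. real q) * ?E" by (simp add: sum_distrib_right)
  also have "(\<Sum>q<N. real q) = real N * (real N - 1) / 2" by (induction N) (auto simp: field_simps)
  finally show "(\<integral>\<theta>. (\<Sum>q<N. \<Sum>p<q. log_chord (\<theta> q) (\<theta> p)) \<partial>?P) = real N * (real N - 1) / 2 * ?E" .
qed

text \<open>The integrand agrees almost surely with \<open>- ln N + (2/N) \<Sum> log_chord\<close>, whose expectation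
  is \<open>(N - 1) E - ln N\<close>; it is measurable because it is a case distinction on a measurable
  event between that function and a constant.\<close>

lemma expectation_tr_N_log_vandermonde:
  fixes N :: nat
  assumes N: "N \<ge> 1"
  defines "F \<equiv> \<lambda>\<theta>. tr_N (matrix_log (mat_adjoint (vandermonde N N \<theta>) * vandermonde N N \<theta>))"
  shows "integrable (PiM {..<N} (\<lambda>_. \<nu>)) F"
    and "(\<integral>\<theta>. F \<theta> \<partial>PiM {..<N} (\<lambda>_. \<nu>)) =
           complex_of_real ((real N - 1) * (\<integral>(s, t). log_chord s t \<partial>(\<nu> \<Otimes>\<^sub>M \<nu>)) - ln (real N))"
proof -
  let ?P = "PiM {..<N} (\<lambda>_. \<nu>)" and ?E = "\<integral>(s, t). log_chord s t \<partial>(\<nu> \<Otimes>\<^sub>M \<nu>)"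
  interpret P: prob_space ?P by (intro prob_space_PiM prob_space_nu)
  define S where "S \<theta> = (\<Sum>q<N. \<Sum>p<q. log_chord (\<theta> q) (\<theta> p))" for \<theta>
  define G where "G \<theta> = - ln (real N) + 2 / real N * S \<theta>" for \<theta>
  have Gint: "integrable ?P G"
    unfolding G_def S_def using expectation_pair_sum(1) by auto
  have Gval: "(\<integral>\<theta>. G \<theta> \<partial>?P) = (real N - 1) * ?E - ln (real N)"
    unfolding G_def S_def using expectation_pair_sum N by (simp add: P.prob_space field_simps)
  have F_eq: "F = (\<lambda>\<theta>. if \<forall>q<N. \<forall>p<q. circ (\<theta> q) \<noteq> circ (\<theta> p)
                        then complex_of_real (G \<theta>) else tr_N (SOME L. False))"
    unfolding F_def G_def S_def using tr_N_log_vandermonde[OF N] by auto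
  have F_meas: "F \<in> borel_measurable ?P"
    unfolding F_eq using borel_measurable_integrable[OF Gint] distinct_points_measurable by measurable
  have AE_eq: "AE \<theta> in ?P. F \<theta> = complex_of_real (G \<theta>)"
    using AE_distinct_points by eventually_elim (simp add: F_eq)
  have G_meas: "(\<lambda>\<theta>. complex_of_real (G \<theta>)) \<in> borel_measurable ?P"
    using borel_measurable_integrable[OF Gint] by measurable
  show "integrable ?P F"
    using integrable_cong_AE[OF F_meas G_meas AE_eq] Gint by (simp add: integrable_of_real)
  show "(\<integral>\<theta>. F \<theta> \<partial>?P) = complex_of_real ((real N - 1) * ?E - ln (real N))"
    using integral_cong_AE[OF F_meas G_meas AE_eq] Gint Gval by (simp add: integral_of_real)
qed

end

theorem mainTheorem2:
  fixes N :: nat and f :: "real \<Rightarrow> real" and \<nu> :: "real measure"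
  assumes N: "N \<ge> 1"
    and f_cont: "continuous_on {0..1} f"
    and f_nonneg: "\<And>x. x \<in> {0..1} \<Longrightarrow> f x \<ge> 0"
    and f_int: "integral {0..1} f = 1"
    and nu_def: "\<nu> = density lborel (\<lambda>x. ennreal (f x * indicator {0..1} x))"
  shows "integrable (PiM {..<N} (\<lambda>_. \<nu>))
           (\<lambda>\<theta>. tr_N (matrix_log (mat_adjoint (vandermonde N N \<theta>) * vandermonde N N \<theta>)))
       \<and> integrable (\<nu> \<Otimes>\<^sub>M \<nu>)
           (\<lambda>(t1, t2). ln (cmod (exp (2 * of_real pi * \<i> * of_real t1) - exp (2 * of_real pi * \<i> * of_real t2))))
       \<and> (\<integral>\<theta>. tr_N (matrix_log (mat_adjoint (vandermonde N N \<theta>) * vandermonde N N \<theta>))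
             \<partial>(PiM {..<N} (\<lambda>_. \<nu>)))
         = complex_of_real
             ((real N - 1) * (\<integral>(t1, t2). ln (cmod (exp (2 * of_real pi * \<i> * of_real t1)
                                                    - exp (2 * of_real pi * \<i> * of_real t2))) \<partial>(\<nu> \<Otimes>\<^sub>M \<nu>))
              - ln (real N))"
proof -
  interpret phase_density f \<nu>
    using f_cont f_nonneg f_int nu_def by unfold_locales
  show ?thesis
    using expectation_tr_N_log_vandermonde[OF N] integrable_log_chord by simp
qed

end
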